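(* Let $A_1,A_2,B_1,B_2$ be $\{0,1\}$-valued random variables. (a) In any classical probability model for $(A_1,A_2,B_1)$ satisfying $1-\langle A_2\rangle-\langle B_1\rangle+\langle A_2B_1\rangle=0$ and $\langle A_1\rangle-\langle A_1B_1\rangle>0$, one has $\langle A_1A_2\rangle>0$. (b) In any classical probability model for $(A_1,A_2,B_2)$ satisfying $\langle A_2\rangle-\langle A_2B_2\rangle=0$ and $\langle A_1B_2\rangle=0$, one has $\langle A_1A_2\rangle=0$. Consequently, for the predictions of Hardy's state, which satisfy all four of these conditions, no common value can be assigned to $\langle A_1A_2\rangle$ in classical models for $(A_1,A_2,B_1)$ and for $(A_1,A_2,B_2)$.
   Context: A classical probability model for a finite set of $\{0,1\}$-valued variables is a probability space on which they are realized as indicator functions; $\langle\cdot\rangle$ denotes expectation in that model. In Hardy's example, $A_i$ is the proposition "the measurement of $Ri$ gives $+1$" and $B_i$ the proposition "the measurement of $Li$ gives $+1$" for spin observables $L1,L2$ (left particle) and $R1,R2$ (right particle), in the state proportional to $|L1+,R1-\rangle-|L2-,R2+\rangle\langle L2-,R2+|L1+,R1-\rangle$. *)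

theory Defs
  imports "HOL-Probability.Probability"
begin

text \<open>A classical probability model for a finite family of {0,1}-valued variables:
  a probability space M on which each variable is a measurable {0,1}-valued function
  (an indicator function).\<close>

definition zero_one_rv :: "'a measure \<Rightarrow> ('a \<Rightarrow> real) \<Rightarrow> bool" where
  "zero_one_rv M X \<longleftrightarrow> X \<in> borel_measurable M \<and> (\<forall>x\<in>space M. X x \<in> {0, 1})"

end

theory Submission
  imports Defs
begin

text \<open>Both parts are pointwise inequalities between indicators, integrated.
  For (a): \<open>A1 (1 - B1) \<le> A1 A2 + (1 - A2)(1 - B1)\<close>, and the second summand has
  expectation \<open>1 - \<langle>A2\<rangle> - \<langle>B1\<rangle> + \<langle>A2 B1\<rangle> = 0\<close>, so \<open>\<langle>A1 A2\<rangle> \<ge> \<langle>A1\<rangle> - \<langle>A1 B1\<rangle> > 0\<close>.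
  For (b): \<open>0 \<le> A1 A2 \<le> A2 (1 - B2) + A1 B2\<close>, whose right-hand side has expectation 0.
  Hardy's state satisfies all four hypotheses, so the two models would have to assign
  \<open>\<langle>A1 A2\<rangle>\<close> a positive value and the value 0 at the same time.\<close>

lemma zero_one_rv_integrable:
  assumes "finite_measure M" "zero_one_rv M X"
  shows "integrable M X"
proof -
  interpret finite_measure M by fact
  show ?thesis
    using assms(2) unfolding zero_one_rv_def
    by (intro integrable_const_bound[where B=1]) (auto intro!: AE_I2)
qed

lemma zero_one_rv_mult:
  assumes "zero_one_rv M X" "zero_one_rv M Y"
  shows "zero_one_rv M (\<lambda>x. X x * Y x)"
  using assms unfolding zero_one_rv_def by fastforce

lemma zero_one_rvD:
  assumes "zero_one_rv M X" "x \<in> space M"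
  shows "X x \<in> {0, 1}"
  using assms unfolding zero_one_rv_def by blast

lemma classical_hardy_joint_pos:
  assumes "prob_space M" "zero_one_rv M A1" "zero_one_rv M A2" "zero_one_rv M B1"
    and no_double_miss: "1 - integral\<^sup>L M A2 - integral\<^sup>L M B1 + integral\<^sup>L M (\<lambda>x. A2 x * B1 x) = 0"
    and pos: "integral\<^sup>L M A1 - integral\<^sup>L M (\<lambda>x. A1 x * B1 x) > 0"
  shows "integral\<^sup>L M (\<lambda>x. A1 x * A2 x) > 0"
proof -
  interpret prob_space M by fact
  have int: "integrable M A1" "integrable M A2" "integrable M B1"
    "integrable M (\<lambda>x. A1 x * B1 x)" "integrable M (\<lambda>x. A2 x * B1 x)"
    "integrable M (\<lambda>x. A1 x * A2 x)"
    using assms(2-4) by (auto intro: zero_one_rv_integrable zero_one_rv_mult finite_measure_axioms)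
  have "integral\<^sup>L M A1 - integral\<^sup>L M (\<lambda>x. A1 x * B1 x) = integral\<^sup>L M (\<lambda>x. A1 x - A1 x * B1 x)"
    using int by simp
  also have "\<dots> \<le> integral\<^sup>L M (\<lambda>x. A1 x * A2 x + (1 - A2 x - B1 x + A2 x * B1 x))"
  proof (rule integral_mono)
    fix x assume "x \<in> space M"
    then have "A1 x \<in> {0, 1}" "A2 x \<in> {0, 1}" "B1 x \<in> {0, 1}"
      using assms(2-4) by (auto dest: zero_one_rvD)
    then show "A1 x - A1 x * B1 x \<le> A1 x * A2 x + (1 - A2 x - B1 x + A2 x * B1 x)"
      by auto
  qed (use int in auto)
  also have "\<dots> = integral\<^sup>L M (\<lambda>x. A1 x * A2 x)"
    using int no_double_miss by (simp add: prob_space)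
  finally show ?thesis
    using pos by linarith
qed

lemma classical_hardy_joint_zero:
  assumes "prob_space N" "zero_one_rv N A1" "zero_one_rv N A2" "zero_one_rv N B2"
    and "integral\<^sup>L N A2 - integral\<^sup>L N (\<lambda>x. A2 x * B2 x) = 0"
    and "integral\<^sup>L N (\<lambda>x. A1 x * B2 x) = 0"
  shows "integral\<^sup>L N (\<lambda>x. A1 x * A2 x) = 0"
proof -
  interpret prob_space N by fact
  have int: "integrable N A1" "integrable N A2" "integrable N B2"
    "integrable N (\<lambda>x. A1 x * B2 x)" "integrable N (\<lambda>x. A2 x * B2 x)"
    "integrable N (\<lambda>x. A1 x * A2 x)"
    using assms(2-4) by (auto intro: zero_one_rv_integrable zero_one_rv_mult finite_measure_axioms)
  have indicator_values: "A1 x \<in> {0, 1}" "A2 x \<in> {0, 1}" "B2 x \<in> {0, 1}" if "x \<in> space N" for x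
    using assms(2-4) that by (auto dest: zero_one_rvD)
  have "integral\<^sup>L N (\<lambda>x. A1 x * A2 x) \<le> integral\<^sup>L N (\<lambda>x. A2 x - A2 x * B2 x + A1 x * B2 x)"
  proof (rule integral_mono)
    fix x assume "x \<in> space N"
    then have "A1 x \<in> {0, 1}" "A2 x \<in> {0, 1}" "B2 x \<in> {0, 1}"
      by (fact indicator_values)+
    then show "A1 x * A2 x \<le> A2 x - A2 x * B2 x + A1 x * B2 x"
      by auto
  qed (use int in auto)
  also have "\<dots> = 0"
    using int assms(5,6) by simp
  finally have "integral\<^sup>L N (\<lambda>x. A1 x * A2 x) \<le> 0" .
  moreover have "0 \<le> integral\<^sup>L N (\<lambda>x. A1 x * A2 x)"
    using indicator_values by (intro Bochner_Integration.integral_nonneg) fastforce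
  ultimately show ?thesis
    by linarith
qed

theorem mainTheorem3:
  shows
  "(\<forall>(M::'a measure) A1 A2 B1.
      prob_space M \<and> zero_one_rv M A1 \<and> zero_one_rv M A2 \<and> zero_one_rv M B1 \<and>
      1 - integral\<^sup>L M A2 - integral\<^sup>L M B1 + integral\<^sup>L M (\<lambda>x. A2 x * B1 x) = 0 \<and>
      integral\<^sup>L M A1 - integral\<^sup>L M (\<lambda>x. A1 x * B1 x) > 0
      \<longrightarrow> integral\<^sup>L M (\<lambda>x. A1 x * A2 x) > 0)
   \<and>
   (\<forall>(N::'b measure) A1 A2 B2.
      prob_space N \<and> zero_one_rv N A1 \<and> zero_one_rv N A2 \<and> zero_one_rv N B2 \<and>
      integral\<^sup>L N A2 - integral\<^sup>L N (\<lambda>x. A2 x * B2 x) = 0 \<and>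
      integral\<^sup>L N (\<lambda>x. A1 x * B2 x) = 0
      \<longrightarrow> integral\<^sup>L N (\<lambda>x. A1 x * A2 x) = 0)
   \<and>
   (\<forall>(M::'a measure) A1 A2 B1 (N::'b measure) A1' A2' B2.
      prob_space M \<and> zero_one_rv M A1 \<and> zero_one_rv M A2 \<and> zero_one_rv M B1 \<and>
      1 - integral\<^sup>L M A2 - integral\<^sup>L M B1 + integral\<^sup>L M (\<lambda>x. A2 x * B1 x) = 0 \<and>
      integral\<^sup>L M A1 - integral\<^sup>L M (\<lambda>x. A1 x * B1 x) > 0 \<and>
      prob_space N \<and> zero_one_rv N A1' \<and> zero_one_rv N A2' \<and> zero_one_rv N B2 \<and>
      integral\<^sup>L N A2' - integral\<^sup>L N (\<lambda>x. A2' x * B2 x) = 0 \<and>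
      integral\<^sup>L N (\<lambda>x. A1' x * B2 x) = 0
      \<longrightarrow> integral\<^sup>L M (\<lambda>x. A1 x * A2 x) \<noteq> integral\<^sup>L N (\<lambda>x. A1' x * A2' x))"
  using classical_hardy_joint_pos classical_hardy_joint_zero
  by (smt (verit))

end
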